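(* Let $x\in V$. There exists $v\in G\cdot x$ such that $\mu_{\mathfrak a}(\overline{G\cdot x})=\mu_{\mathfrak a}(\overline{A\cdot v})$; in particular $\mu_{\mathfrak a}(\overline{G\cdot x})$ is a polyhedral.
   Context: Let $V$ be a finite-dimensional real vector space with a scalar product $\langle\cdot,\cdot\rangle$. Let $G\subset\mathrm{GL}(V)$ be a connected closed subgroup, closed under transpose, with Lie algebra $\mathfrak g$, such that $G=K\exp(\mathfrak p)$ with $K=G\cap\mathrm O(V)$, $\mathfrak p=\mathfrak g\cap\mathrm{Sym}(V)$. Let $\mathfrak a\subset\mathfrak p$ be an Abelian subalgebra, $A=\exp(\mathfrak a)$, and $\mu_{\mathfrak a}:V\to\mathfrak a^*$, $\mu_{\mathfrak a}(x)(\xi)=\langle\xi x,x\rangle$. A polyhedral is an intersection of finitely many closed linear half-spaces. *)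

theory Defs
  imports "HOL-Analysis.Analysis"
begin

text \<open>V = real^'n with the standard scalar product (orthonormal coordinates).
  Linear endomorphisms of V are matrices real^'n^'n.\<close>

definition matpow :: "real^'n^'n \<Rightarrow> nat \<Rightarrow> real^'n^'n" where
  "matpow X k = (((**) X) ^^ k) (mat 1)"

definition mexp :: "real^'n^'n \<Rightarrow> real^'n^'n" where
  "mexp X = (\<Sum>k. (1 / fact k) *\<^sub>R matpow X k)"

definition GL :: "(real^'n^'n) set" where
  "GL = {g. invertible g}"

definition closed_transpose_subgroup :: "(real^'n^'n) set \<Rightarrow> bool" where
  "closed_transpose_subgroup G \<longleftrightarrow>
     G \<subseteq> GL \<and> mat 1 \<in> G \<and>
     (\<forall>g\<in>G. \<forall>h\<in>G. g ** h \<in> G) \<and> (\<forall>g\<in>G. matrix_inv g \<in> G) \<and>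
     closedin (top_of_set GL) G \<and> connected G \<and>
     (\<forall>g\<in>G. transpose g \<in> G)"

definition lie_alg :: "(real^'n^'n) set \<Rightarrow> (real^'n^'n) set" where
  "lie_alg G = {X. \<forall>t::real. mexp (t *\<^sub>R X) \<in> G}"

definition Kpart :: "(real^'n^'n) set \<Rightarrow> (real^'n^'n) set" where
  "Kpart G = {g \<in> G. orthogonal_matrix g}"

definition ppart :: "(real^'n^'n) set \<Rightarrow> (real^'n^'n) set" where
  "ppart G = {X \<in> lie_alg G. transpose X = X}"

definition abelian_subalg :: "(real^'n^'n) set \<Rightarrow> (real^'n^'n) set \<Rightarrow> bool" where
  "abelian_subalg a G \<longleftrightarrow> subspace a \<and> a \<subseteq> ppart G \<and>
     (\<forall>X\<in>a. \<forall>Y\<in>a. X ** Y - Y ** X = 0)"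

text \<open>Elements of the dual space a^* are represented as functions on matrices
  that are linear on a and vanish outside a.\<close>
definition adual :: "(real^'n^'n) set \<Rightarrow> (real^'n^'n \<Rightarrow> real) set" where
  "adual a = {l. (\<forall>\<xi>. \<xi> \<notin> a \<longrightarrow> l \<xi> = 0) \<and>
     (\<forall>\<xi>\<in>a. \<forall>\<eta>\<in>a. \<forall>c::real. l (c *\<^sub>R \<xi> + \<eta>) = c * l \<xi> + l \<eta>)}"

definition mu :: "(real^'n^'n) set \<Rightarrow> real^'n \<Rightarrow> (real^'n^'n \<Rightarrow> real)" where
  "mu a x = (\<lambda>\<xi>. if \<xi> \<in> a then (\<xi> *v x) \<bullet> x else 0)"

text \<open>Polyhedral subset of a^*: intersection of finitely many closed linear half-spaces
  (every linear functional on a^* is evaluation at some element of a).\<close>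
definition polyhedral :: "(real^'n^'n) set \<Rightarrow> (real^'n^'n \<Rightarrow> real) set \<Rightarrow> bool" where
  "polyhedral a P \<longleftrightarrow> (\<exists>F. finite F \<and> F \<subseteq> a \<and>
      P = {l \<in> adual a. \<forall>\<xi>\<in>F. l \<xi> \<le> 0})"

definition orbit :: "(real^'n^'n) set \<Rightarrow> real^'n \<Rightarrow> (real^'n) set" where
  "orbit H x = (\<lambda>g. g *v x) ` H"

end

theory Submission
  imports Defs
begin

(* Diagonalise the commuting symmetric matrices of a simultaneously in an orthonormal basis B,
   with eigenvalues lambda_b. In these coordinates mexp xi scales the b-th coordinate by
   exp (lambda_b xi), and mu a w = sum_b (b . w)^2 lambda_b lies in the cone spanned by the
   lambda_b with b . w <> 0.
   Because G is connected, a linear functional vanishing on an open subset of G vanishes on G,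
   so some v in G x has non-zero b-coordinate whenever some point of G x does. Hence mu a maps
   closure (G x) into the cone C spanned by the lambda_b with b . v <> 0, and C is polyhedral.
   Conversely every point sum_b t_b lambda_b of C is attained on closure (A v): along a
   minimising sequence of the coercive function xi |-> |mexp xi v|^2 / 2 - sum_b t_b lambda_b xi
   the points mexp xi v converge, and the first order condition at the limit w reads
   mu a w = sum_b t_b lambda_b. *)

section \<open>Connected matrix groups\<close>

lemma linear_matrix_mult_left: "linear (\<lambda>h::real^'n^'n. g ** h)"
  by (rule linearI) (simp add: matrix_add_ldistrib, metis matrix_scalar_ac scalar_matrix_assoc)

lemma linear_matrix_mult_right: "linear (\<lambda>h::real^'n^'n. h ** g)"
  by (rule linearI)
    (simp_all add: matrix_matrix_mult_def vec_eq_iff sum.distrib sum_distrib_left algebra_simps)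

lemma matrix_inv_cancel:
  assumes "invertible (g::real^'n^'n)"
  shows "g ** matrix_inv g = mat 1" and "matrix_inv g ** g = mat 1"
proof -
  have "\<exists>h. g ** h = mat 1 \<and> h ** g = mat 1"
    using assms by (simp add: invertible_def)
  then have "g ** matrix_inv g = mat 1 \<and> matrix_inv g ** g = mat 1"
    unfolding matrix_inv_def by (rule someI_ex)
  then show "g ** matrix_inv g = mat 1" and "matrix_inv g ** g = mat 1" by auto
qed

lemma matrix_inv_mem_subalgebra:
  fixes M :: "(real^'n^'n) set"
  assumes M: "subspace M" "mat 1 \<in> M" "\<And>x y. x \<in> M \<Longrightarrow> y \<in> M \<Longrightarrow> x ** y \<in> M"
    and g: "invertible g" "g \<in> M"
  shows "matrix_inv g \<in> M"
proof -
  have inj: "inj_on (\<lambda>m. g ** m) (span M)"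
    by (rule inj_onI) (metis matrix_inv_cancel(2)[OF g(1)] matrix_mul_assoc matrix_mul_lid)
  have "(\<lambda>m. g ** m) ` M = M"
  proof (rule subspace_dim_equal)
    show "subspace ((\<lambda>m. g ** m) ` M)"
      using linear_subspace_image[OF linear_matrix_mult_left M(1)] .
    show "(\<lambda>m. g ** m) ` M \<subseteq> M" using M(3) g(2) by auto
    show "dim M \<le> dim ((\<lambda>m. g ** m) ` M)"
      using dim_image_eq[OF linear_matrix_mult_left inj] by simp
  qed (fact M(1))
  then obtain m where m: "m \<in> M" "g ** m = mat 1"
    using M(2) by (metis imageE)
  have "matrix_inv g = matrix_inv g ** (g ** m)" by (simp add: m(2))
  also have "\<dots> = m" by (simp add: matrix_mul_assoc matrix_inv_cancel(2)[OF g(1)])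
  finally show ?thesis using m(1) by simp
qed

locale connected_matrix_group =
  fixes G :: "(real^'n^'n) set"
  assumes subset_GL: "G \<subseteq> GL" and one_mem: "mat 1 \<in> G"
    and mult_mem: "\<And>g h. g \<in> G \<Longrightarrow> h \<in> G \<Longrightarrow> g ** h \<in> G"
    and inv_mem: "\<And>g. g \<in> G \<Longrightarrow> matrix_inv g \<in> G"
    and connected_G: "connected G"
begin

lemma invertible_mem: "g \<in> G \<Longrightarrow> invertible g"
  using subset_GL by (auto simp: GL_def)

lemma openin_vimage_mult_left:
  assumes "openin (top_of_set G) W" "g \<in> G"
  shows "openin (top_of_set G) {h \<in> G. g ** h \<in> W}"
proof -
  obtain T where T: "open T" "W = G \<inter> T" using assms(1) openin_open by metis
  have "{h \<in> G. g ** h \<in> W} = G \<inter> (\<lambda>h. g ** h) -` T"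
    using T(2) assms(2) mult_mem by auto
  moreover have "open ((\<lambda>h. g ** h) -` T)"
    using T(1) linear_matrix_mult_left linear_continuous_on linear_conv_bounded_linear
    by (blast intro: open_vimage)
  ultimately show ?thesis by (simp add: openin_open_Int)
qed

lemma openin_image_mult_left:
  assumes "openin (top_of_set G) N" "g \<in> G"
  shows "openin (top_of_set G) ((\<lambda>h. g ** h) ` N)"
proof -
  have "N \<subseteq> G" using assms(1) openin_imp_subset by blast
  have "(\<lambda>h. g ** h) ` N = {h \<in> G. matrix_inv g ** h \<in> N}"
  proof safe
    fix h assume "h \<in> G" "matrix_inv g ** h \<in> N"
    moreover have "h = g ** (matrix_inv g ** h)"
      by (simp add: matrix_mul_assoc matrix_inv_cancel(1)[OF invertible_mem[OF assms(2)]])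
    ultimately show "h \<in> (\<lambda>h. g ** h) ` N" by blast
  qed (use \<open>N \<subseteq> G\<close> assms(2) mult_mem matrix_inv_cancel(2)[OF invertible_mem[OF assms(2)]] in
       \<open>auto simp: matrix_mul_assoc\<close>)
  then show ?thesis using openin_vimage_mult_left[OF assms(1) inv_mem[OF assms(2)]] by simp
qed

lemma openin_if_translates_subset:
  assumes N: "openin (top_of_set G) N" "mat 1 \<in> N" and "S \<subseteq> G"
    and translates: "\<And>g. g \<in> S \<Longrightarrow> (\<lambda>z. g ** z) ` N \<subseteq> S"
  shows "openin (top_of_set G) S"
proof -
  have "S = (\<Union>g\<in>S. (\<lambda>z. g ** z) ` N)"
  proof
    have "g \<in> (\<lambda>z. g ** z) ` N" for g
      using N(2) by (rule image_eqI[rotated]) simp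
    then show "S \<subseteq> (\<Union>g\<in>S. (\<lambda>z. g ** z) ` N)" by blast
    show "(\<Union>g\<in>S. (\<lambda>z. g ** z) ` N) \<subseteq> S" using translates by (rule UN_least)
  qed
  moreover have "openin (top_of_set G) (\<Union>g\<in>S. (\<lambda>z. g ** z) ` N)"
    using openin_image_mult_left[OF N(1)] \<open>S \<subseteq> G\<close> by (intro openin_Union) auto
  ultimately show ?thesis by simp
qed

lemma open_subgroup_eq:
  assumes N: "openin (top_of_set G) N" "mat 1 \<in> N" "N \<subseteq> H" and "H \<subseteq> G"
    and H_mult: "\<And>g h. g \<in> H \<Longrightarrow> h \<in> H \<Longrightarrow> g ** h \<in> H"
    and H_inv: "\<And>g. g \<in> H \<Longrightarrow> matrix_inv g \<in> H"
  shows "H = G"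
proof -
  have "openin (top_of_set G) H"
  proof (rule openin_if_translates_subset[OF N(1,2) \<open>H \<subseteq> G\<close>])
    show "(\<lambda>z. h ** z) ` N \<subseteq> H" if "h \<in> H" for h
      using N(3) H_mult that by (intro image_subsetI) auto
  qed
  moreover have "openin (top_of_set G) (G - H)"
  proof (rule openin_if_translates_subset[OF N(1,2)])
    fix g assume g: "g \<in> G - H"
    show "(\<lambda>z. g ** z) ` N \<subseteq> G - H"
    proof (rule image_subsetI)
      fix z assume "z \<in> N"
      then have z: "z \<in> H" "z \<in> G" using N(3) \<open>H \<subseteq> G\<close> by auto
      have "g ** z \<notin> H"
      proof
        assume "g ** z \<in> H"
        then have "(g ** z) ** matrix_inv z \<in> H" using H_mult H_inv z(1) by blast
        then show False
          using g matrix_inv_cancel(1)[OF invertible_mem[OF z(2)]]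
          by (simp add: matrix_mul_assoc[symmetric])
      qed
      then show "g ** z \<in> G - H" using g z(2) mult_mem by blast
    qed
  qed auto
  then have "closedin (top_of_set G) H" using \<open>H \<subseteq> G\<close> by (simp add: closedin_def)
  moreover have "H \<noteq> {}" using N by auto
  ultimately show ?thesis using connected_G connected_clopen by blast
qed

lemma subset_subalgebra_containing_neighbourhood:
  assumes M: "subspace M" "mat 1 \<in> M" "\<And>x y. x \<in> M \<Longrightarrow> y \<in> M \<Longrightarrow> x ** y \<in> M"
    and N: "openin (top_of_set G) N" "mat 1 \<in> N" "N \<subseteq> M"
  shows "G \<subseteq> M"
proof -
  have "G \<inter> M = G"
  proof (rule open_subgroup_eq[OF N(1,2)])
    show "N \<subseteq> G \<inter> M" using N openin_imp_subset by blast
    show "g ** h \<in> G \<inter> M" if "g \<in> G \<inter> M" "h \<in> G \<inter> M" for g h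
      using that mult_mem M(3) by simp
    show "matrix_inv g \<in> G \<inter> M" if "g \<in> G \<inter> M" for g
      using that inv_mem invertible_mem M by (simp add: matrix_inv_mem_subalgebra)
  qed simp
  then show ?thesis by blast
qed

text \<open>Among the neighbourhoods of the identity choose one, \<open>N\<^sub>0\<close>, whose span has minimal
  dimension. Every smaller neighbourhood spans the same space \<open>M\<close>, which is therefore stable under
  left multiplication by \<open>N\<^sub>0\<close>, hence a subalgebra, and \<open>G \<inter> M\<close> is an open subgroup.\<close>

lemma subset_span_neighbourhood:
  assumes "openin (top_of_set G) N" "mat 1 \<in> N"
  shows "G \<subseteq> span N"
proof -
  define nbhd where "nbhd N \<longleftrightarrow> openin (top_of_set G) N \<and> mat 1 \<in> N" for N
  have "nbhd G" using one_mem by (simp add: nbhd_def)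
  then obtain N0 where N0: "nbhd N0" and N0_min: "\<And>N. nbhd N \<Longrightarrow> dim N0 \<le> dim N"
    using ex_has_least_nat[of nbhd G dim] by blast
  have N0_open: "openin (top_of_set G) N0" and one_N0: "mat 1 \<in> N0"
    using N0 by (simp_all add: nbhd_def)
  have N0_G: "N0 \<subseteq> G" using N0_open openin_imp_subset by blast
  define M where "M = span N0"
  have span_eq: "span N = M" if "nbhd N" "N \<subseteq> N0" for N
    unfolding M_def using that(2) N0_min[OF that(1)] by (rule dim_eq_span)
  have N0_mult: "n ** m \<in> M" if "n \<in> N0" "m \<in> M" for n m
  proof -
    have "n \<in> G" using that(1) N0_G by blast
    define N1 where "N1 = {h \<in> G. n ** h \<in> N0} \<inter> N0"
    have "openin (top_of_set G) N1"
      unfolding N1_def using openin_vimage_mult_left[OF N0_open \<open>n \<in> G\<close>] N0_open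
      by (rule openin_Int)
    moreover have "mat 1 \<in> N1" using one_mem one_N0 that(1) by (simp add: N1_def)
    ultimately have "span N1 = M" by (intro span_eq) (auto simp: nbhd_def N1_def)
    then have "n ** m \<in> (\<lambda>h. n ** h) ` span N1" using that(2) by simp
    also have "\<dots> = span ((\<lambda>h. n ** h) ` N1)"
      by (rule linear_span_image[OF linear_matrix_mult_left, symmetric])
    also have "\<dots> \<subseteq> M" unfolding M_def by (rule span_mono) (auto simp: N1_def)
    finally show ?thesis .
  qed
  have M_mult: "x ** y \<in> M" if "x \<in> M" "y \<in> M" for x y
  proof -
    have "subspace {x. x ** y \<in> M}"
      by (rule linear_subspace_linear_preimage[OF linear_matrix_mult_right]) (simp add: M_def)
    moreover have "N0 \<subseteq> {x. x ** y \<in> M}" using N0_mult that(2) by blast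
    ultimately have "M \<subseteq> {x. x ** y \<in> M}" unfolding M_def by (rule span_minimal[rotated])
    then show ?thesis using that(1) by blast
  qed
  have "G \<subseteq> M"
  proof (rule subset_subalgebra_containing_neighbourhood[OF _ _ M_mult N0_open one_N0])
    show "subspace M" "mat 1 \<in> M" "N0 \<subseteq> M"
      using one_N0 by (simp_all add: M_def span_base span_superset)
  qed
  moreover have "span (N \<inter> N0) = M"
    using assms N0_open one_N0 by (intro span_eq) (simp_all add: nbhd_def openin_Int)
  ultimately show ?thesis using span_mono[of "N \<inter> N0" N] by blast
qed

lemma linear_eq_0_on_openin:
  assumes L: "linear L" and W: "openin (top_of_set G) W" "W \<noteq> {}"
    and zero: "\<And>g. g \<in> W \<Longrightarrow> L g = 0" and "g \<in> G"
  shows "L g = 0"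
proof -
  obtain g0 where g0: "g0 \<in> W" using W(2) by blast
  then have "g0 \<in> G" using W(1) openin_imp_subset by blast
  define N where "N = {h \<in> G. g0 ** h \<in> W}"
  have "G \<subseteq> span N"
    using openin_vimage_mult_left[OF W(1) \<open>g0 \<in> G\<close>] one_mem g0
    by (intro subset_span_neighbourhood) (simp_all add: N_def)
  moreover have "linear (\<lambda>h. L (g0 ** h))"
    using linear_compose[OF linear_matrix_mult_left L] by (simp add: o_def)
  then have "L (g0 ** h) = 0" if "h \<in> span N" for h
    by (rule linear_eq_0_on_span[OF _ _ that]) (simp add: N_def zero)
  ultimately have "L (g0 ** h) = 0" if "h \<in> G" for h
    using that by blast
  moreover have "matrix_inv g0 ** g \<in> G" using inv_mem mult_mem \<open>g0 \<in> G\<close> \<open>g \<in> G\<close> by blast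
  ultimately have "L (g0 ** (matrix_inv g0 ** g)) = 0" by blast
  then show ?thesis
    by (simp add: matrix_mul_assoc matrix_inv_cancel(1)[OF invertible_mem[OF \<open>g0 \<in> G\<close>]])
qed

lemma exists_common_nonzero:
  assumes "finite J" and linear: "\<And>j. j \<in> J \<Longrightarrow> linear (L j)"
    and nonzero: "\<And>j. j \<in> J \<Longrightarrow> \<exists>g\<in>G. L j g \<noteq> 0"
    and W: "openin (top_of_set G) W" "W \<noteq> {}"
  shows "\<exists>g\<in>W. \<forall>j\<in>J. L j g \<noteq> (0::real)"
  using \<open>finite J\<close> linear nonzero W
proof (induction J arbitrary: W rule: finite_induct)
  case empty
  then show ?case by auto
next
  case (insert j J)
  define W' where "W' = W \<inter> {g. L j g \<noteq> 0}"
  have "continuous_on UNIV (L j)"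
    using insert.prems(1) linear_continuous_on linear_conv_bounded_linear by blast
  then have "open {g. L j g \<noteq> 0}"
    using open_vimage[OF open_Compl[OF closed_singleton[of 0]]] by (simp add: vimage_def)
  then have W'_open: "openin (top_of_set G) W'"
    unfolding W'_def using insert.prems(3) by (simp add: openin_Int_open)
  have W'_nonempty: "W' \<noteq> {}"
  proof
    assume "W' = {}"
    then have "L j g = 0" if "g \<in> G" for g
      using linear_eq_0_on_openin[OF insert.prems(1) insert.prems(3,4) _ that]
      by (auto simp: W'_def)
    then show False using insert.prems(2) by auto
  qed
  have "\<exists>g\<in>W'. \<forall>i\<in>J. L i g \<noteq> 0"
    by (rule insert.IH) (use insert.prems W'_open W'_nonempty in auto)
  then show ?case by (auto simp: W'_def)
qed

end

section \<open>Orthonormal eigenbases of commuting symmetric matrices\<close>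

lemma symmetric_matrix_inner_commute:
  assumes "transpose S = (S::real^'n^'n)"
  shows "(S *v x) \<bullet> y = x \<bullet> (S *v y)"
  by (metis assms dot_lmul_matrix transpose_matrix_vector)

lemma linear_le_quadratic_imp_nonpos:
  fixes p q :: real
  assumes "\<And>t. t > 0 \<Longrightarrow> p * t \<le> q * t\<^sup>2"
  shows "p \<le> 0"
proof (rule ccontr)
  assume "\<not> p \<le> 0"
  define t where "t = p / (\<bar>q\<bar> + 1)"
  have "t > 0" using \<open>\<not> p \<le> 0\<close> by (simp add: t_def)
  then have "p \<le> q * t"
    using assms[of t] by (simp add: power2_eq_square mult.assoc)
  also have "\<dots> < (\<bar>q\<bar> + 1) * t"
    using \<open>t > 0\<close> by (simp add: abs_ge_self add_strict_increasing2 mult_strict_right_mono)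
  also have "\<dots> = p" by (simp add: t_def)
  finally show False by simp
qed

text \<open>At a unit maximiser \<open>u\<^sub>0\<close> of the Rayleigh quotient, with maximum \<open>c\<close>, the component
  \<open>y = S u\<^sub>0 - c u\<^sub>0\<close> orthogonal to \<open>u\<^sub>0\<close> would increase the quotient to first order in
  direction \<open>y\<close>.\<close>

lemma rayleigh_maximiser_eigenvector:
  fixes S :: "real^'n^'n"
  assumes sym: "transpose S = S" and U: "subspace U" and invariant: "\<And>u. u \<in> U \<Longrightarrow> S *v u \<in> U"
    and u0: "u0 \<in> U" "u0 \<bullet> u0 = 1"
    and rayleigh: "\<And>z. z \<in> U \<Longrightarrow> (S *v z) \<bullet> z \<le> ((S *v u0) \<bullet> u0) * (z \<bullet> z)"
  shows "S *v u0 = ((S *v u0) \<bullet> u0) *\<^sub>R u0"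
proof -
  define f where "f z = (S *v z) \<bullet> z" for z
  define c where "c = f u0"
  define y where "y = S *v u0 - c *\<^sub>R u0"
  have y: "y \<in> U" using U u0(1) invariant by (simp add: y_def subspace_diff subspace_mul)
  have u0y: "u0 \<bullet> y = 0" using u0(2) by (simp add: y_def inner_diff_right c_def f_def inner_commute)
  have Su0y: "(S *v u0) \<bullet> y = y \<bullet> y"
    using u0y by (simp add: y_def inner_diff_left inner_commute)
  have "2 * (y \<bullet> y) \<le> 0"
  proof (rule linear_le_quadratic_imp_nonpos)
    fix t :: real assume "t > 0"
    have "f (u0 + t *\<^sub>R y) = c + 2 * t * (y \<bullet> y) + t\<^sup>2 * f y"
      using Su0y symmetric_matrix_inner_commute[OF sym, of y u0]
      by (simp add: f_def c_def matrix_vector_right_distrib matrix_vector_mult_scaleR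
          inner_add_left inner_add_right inner_commute power2_eq_square algebra_simps)
    moreover have "(u0 + t *\<^sub>R y) \<bullet> (u0 + t *\<^sub>R y) = 1 + t\<^sup>2 * (y \<bullet> y)"
      using u0(2) u0y by (simp add: inner_add_left inner_add_right inner_commute power2_eq_square)
    moreover have "u0 + t *\<^sub>R y \<in> U" using U u0(1) y by (simp add: subspace_add subspace_mul)
    ultimately show "2 * (y \<bullet> y) * t \<le> (c * (y \<bullet> y) - f y) * t\<^sup>2"
      using rayleigh[of "u0 + t *\<^sub>R y"] by (simp add: f_def c_def algebra_simps)
  qed
  then have "y \<bullet> y = 0" using inner_ge_zero[of y] by linarith
  then show ?thesis by (simp add: y_def c_def f_def)
qed

lemma symmetric_matrix_has_eigenvector:
  fixes S :: "real^'n^'n"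
  assumes sym: "transpose S = S" and U: "subspace U" "U \<noteq> {0}"
    and invariant: "\<And>u. u \<in> U \<Longrightarrow> S *v u \<in> U"
  shows "\<exists>u\<in>U. u \<noteq> 0 \<and> (\<exists>c. S *v u = c *\<^sub>R u)"
proof -
  define f where "f z = (S *v z) \<bullet> z" for z
  obtain u1 where u1: "u1 \<in> U" "u1 \<noteq> 0" using U subspace_0 by blast
  have "compact (U \<inter> sphere 0 1)" by (rule closed_Int_compact[OF closed_subspace[OF U(1)]]) simp
  moreover have "u1 /\<^sub>R norm u1 \<in> U \<inter> sphere 0 1" using u1 U(1) by (simp add: subspace_mul)
  moreover have "continuous_on (U \<inter> sphere 0 1) f" unfolding f_def
    by (intro continuous_on_inner matrix_vector_mult_linear_continuous_on continuous_on_id)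
  ultimately obtain u0 where u0_sphere: "u0 \<in> U \<inter> sphere 0 1"
    and u0_max: "\<And>z. z \<in> U \<inter> sphere 0 1 \<Longrightarrow> f z \<le> f u0"
    using continuous_attains_sup[of "U \<inter> sphere 0 1" f] by blast
  then have u0: "u0 \<in> U" "norm u0 = 1" "u0 \<bullet> u0 = 1" by (auto simp: dot_square_norm)
  have bound: "f z \<le> f u0 * (z \<bullet> z)" if "z \<in> U" for z
  proof (cases "z = 0")
    case False
    then have "f (z /\<^sub>R norm z) \<le> f u0" using that U(1) u0_max by (simp add: subspace_mul)
    moreover have "f (z /\<^sub>R norm z) = f z / (z \<bullet> z)"
      by (simp add: f_def matrix_vector_mult_scaleR dot_square_norm power2_eq_square field_simps)
    ultimately show ?thesis using False by (simp add: divide_le_eq mult.commute)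
  qed (simp add: f_def)
  have "S *v u0 = f u0 *\<^sub>R u0"
    unfolding f_def
    by (rule rayleigh_maximiser_eigenvector[OF sym U(1) invariant u0(1,3) bound[unfolded f_def]])
  moreover have "u0 \<noteq> 0" using u0(2) by auto
  ultimately show ?thesis using u0(1) by blast
qed

lemma span_insert_orthogonal_slice:
  fixes b :: "'a::euclidean_space"
  assumes W: "subspace W" "b \<in> W" "b \<bullet> b = 1" and B': "span B' = {w \<in> W. b \<bullet> w = 0}"
  shows "span (insert b B') = W"
proof
  have "B' \<subseteq> W" using B' span_superset by blast
  then show "span (insert b B') \<subseteq> W" using W by (intro span_minimal) auto
  show "W \<subseteq> span (insert b B')"
  proof
    fix w assume "w \<in> W"
    then have "w - (b \<bullet> w) *\<^sub>R b \<in> span B'"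
      using W B' by (simp add: subspace_diff subspace_mul inner_diff_right)
    then have "(w - (b \<bullet> w) *\<^sub>R b) + (b \<bullet> w) *\<^sub>R b \<in> span (insert b B')"
      by (intro span_add span_mul) (auto intro: span_base span_mono[THEN subsetD, rotated])
    then show "w \<in> span (insert b B')" by simp
  qed
qed

definition invariant_subspace :: "(real^'n^'n) set \<Rightarrow> (real^'n) set \<Rightarrow> bool" where
  "invariant_subspace A W \<longleftrightarrow> subspace W \<and> (\<forall>X\<in>A. \<forall>w\<in>W. X *v w \<in> W)"

locale commuting_symmetric_matrices =
  fixes A :: "(real^'n^'n) set"
  assumes symmetric: "\<And>X. X \<in> A \<Longrightarrow> transpose X = X"
    and commute: "\<And>X Y. X \<in> A \<Longrightarrow> Y \<in> A \<Longrightarrow> X ** Y = Y ** X"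
begin

text \<open>A non-zero invariant subspace of minimal dimension lies in an eigenspace of every \<open>X \<in> A\<close>,
  because the eigenspaces of \<open>X\<close> inside it are again invariant.\<close>

lemma common_eigenvector:
  assumes "invariant_subspace A W" "W \<noteq> {0}"
  shows "\<exists>u\<in>W. u \<noteq> 0 \<and> (\<forall>X\<in>A. \<exists>c. X *v u = c *\<^sub>R u)"
proof -
  define P where "P U \<longleftrightarrow> invariant_subspace A U \<and> U \<subseteq> W \<and> U \<noteq> {0}" for U
  have "P W" using assms by (simp add: P_def)
  then obtain U where U: "P U" and U_min: "\<And>U'. P U' \<Longrightarrow> dim U \<le> dim U'"
    using ex_has_least_nat[of P W dim] by blast
  have U_sub: "subspace U" and U_inv: "\<And>X w. X \<in> A \<Longrightarrow> w \<in> U \<Longrightarrow> X *v w \<in> U"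
    using U by (auto simp: P_def invariant_subspace_def)
  obtain u where u: "u \<in> U" "u \<noteq> 0" using U U_sub subspace_0 by (auto simp: P_def)
  have "\<exists>c. X *v u = c *\<^sub>R u" if X: "X \<in> A" for X
  proof -
    obtain e c where e: "e \<in> U" "e \<noteq> 0" "X *v e = c *\<^sub>R e"
      using symmetric_matrix_has_eigenvector[OF symmetric[OF X] U_sub] U U_inv[OF X]
      by (auto simp: P_def)
    define E where "E = {z \<in> U. X *v z = c *\<^sub>R z}"
    have E_sub: "subspace E" using U_sub unfolding E_def subspace_def
      by (simp add: matrix_vector_right_distrib matrix_vector_mult_scaleR scaleR_add_right)
    have "invariant_subspace A E" unfolding invariant_subspace_def
    proof (intro conjI E_sub ballI)
      fix Y w assume Y: "Y \<in> A" and w: "w \<in> E"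
      have "X *v (Y *v w) = Y *v (X *v w)"
        using commute[OF X Y] by (simp add: matrix_vector_mul_assoc)
      also have "\<dots> = c *\<^sub>R (Y *v w)" using w by (simp add: E_def matrix_vector_mult_scaleR)
      finally show "Y *v w \<in> E" using U_inv[OF Y] w by (auto simp: E_def)
    qed
    then have "P E" using e U by (auto simp: P_def E_def)
    then have "E = U"
      using U_min E_sub U_sub subspace_dim_equal
      by (metis (no_types, lifting) E_def mem_Collect_eq subsetI)
    then show ?thesis using u(1) by (auto simp: E_def)
  qed
  moreover have "u \<in> W" using u(1) U by (auto simp: P_def)
  ultimately show ?thesis using u(2) by blast
qed

lemma invariant_subspace_orthogonal:
  assumes "invariant_subspace A W" and b: "\<forall>X\<in>A. \<exists>c. X *v b = c *\<^sub>R b"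
  shows "invariant_subspace A {w \<in> W. b \<bullet> w = 0}"
  unfolding invariant_subspace_def
proof (intro conjI ballI)
  show "subspace {w \<in> W. b \<bullet> w = 0}"
    using assms(1) by (auto simp: invariant_subspace_def subspace_def inner_add_right)
  fix X w assume X: "X \<in> A" and w: "w \<in> {w \<in> W. b \<bullet> w = 0}"
  obtain c where c: "X *v b = c *\<^sub>R b" using b X by blast
  have "b \<bullet> (X *v w) = (X *v b) \<bullet> w"
    using symmetric_matrix_inner_commute[OF symmetric[OF X]] by simp
  also have "\<dots> = 0" using c w by simp
  finally show "X *v w \<in> {w \<in> W. b \<bullet> w = 0}"
    using w X assms(1) by (auto simp: invariant_subspace_def)
qed

lemma orthonormal_common_eigenbasis:
  assumes "invariant_subspace A W"
  shows "\<exists>B. B \<subseteq> W \<and> finite B \<and> pairwise orthogonal B \<and> (\<forall>b\<in>B. norm b = 1) \<and> span B = W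
    \<and> (\<forall>b\<in>B. \<forall>X\<in>A. \<exists>c. X *v b = c *\<^sub>R b)"
  using assms
proof (induction "dim W" arbitrary: W rule: less_induct)
  case less
  have W: "subspace W" using less.prems by (simp add: invariant_subspace_def)
  show ?case
  proof (cases "W = {0}")
    case True
    then show ?thesis by (intro exI[of _ "{}"]) auto
  next
    case False
    then obtain u where u: "u \<in> W" "u \<noteq> 0" "\<forall>X\<in>A. \<exists>c. X *v u = c *\<^sub>R u"
      using common_eigenvector[OF less.prems] by blast
    define b where "b = u /\<^sub>R norm u"
    have b: "b \<in> W" "norm b = 1" "b \<bullet> b = 1" "\<forall>X\<in>A. \<exists>c. X *v b = c *\<^sub>R b"
      using u W by (auto simp: b_def subspace_mul dot_square_norm matrix_vector_mult_scaleR)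
    define W' where "W' = {w \<in> W. b \<bullet> w = 0}"
    have W'_inv: "invariant_subspace A W'"
      unfolding W'_def using less.prems b(4) by (rule invariant_subspace_orthogonal)
    have "W' \<subseteq> W" "b \<in> W - W'" using b by (auto simp: W'_def)
    then have "W' \<subset> W" by blast
    then have "dim W' < dim W"
      using W W'_inv by (metis dim_psubset invariant_subspace_def span_eq_iff)
    then obtain B' where B': "B' \<subseteq> W'" "finite B'" "pairwise orthogonal B'" "\<forall>b\<in>B'. norm b = 1"
      "span B' = W'" "\<forall>b\<in>B'. \<forall>X\<in>A. \<exists>c. X *v b = c *\<^sub>R b"
      using less.hyps W'_inv by blast
    have "span (insert b B') = W"
      using W b(1,3) B'(5) unfolding W'_def by (rule span_insert_orthogonal_slice)
    moreover have "pairwise orthogonal (insert b B')"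
      using B'(1,3) by (auto simp: pairwise_insert orthogonal_def W'_def inner_commute)
    ultimately show ?thesis
      using b B' by (intro exI[of _ "insert b B'"]) (auto simp: W'_def)
  qed
qed

end

section \<open>Coordinates in a common eigenbasis\<close>

lemma orthonormal_expansion:
  fixes B :: "'a::euclidean_space set"
  assumes "finite B" "pairwise orthogonal B" "\<forall>b\<in>B. norm b = 1" "x \<in> span B"
  shows "x = (\<Sum>b\<in>B. (b \<bullet> x) *\<^sub>R b)"
proof -
  have "b' \<bullet> (\<Sum>b\<in>B. (b \<bullet> x) *\<^sub>R b) = b' \<bullet> x" if "b' \<in> B" for b'
  proof -
    have "b' \<bullet> (\<Sum>b\<in>B. (b \<bullet> x) *\<^sub>R b) = (\<Sum>b\<in>B. if b = b' then b \<bullet> x else 0)"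
      using assms(2,3) that unfolding inner_sum_right
      by (intro sum.cong) (auto simp: pairwise_def orthogonal_def dot_square_norm inner_commute)
    also have "\<dots> = b' \<bullet> x" using assms(1) that by (simp add: sum.delta')
    finally show ?thesis .
  qed
  then have "orthogonal (x - (\<Sum>b\<in>B. (b \<bullet> x) *\<^sub>R b)) b'" if "b' \<in> B" for b'
    using that by (simp add: orthogonal_def inner_commute[of _ b'] inner_diff_right)
  moreover have "x - (\<Sum>b\<in>B. (b \<bullet> x) *\<^sub>R b) \<in> span B"
    using assms(4) by (simp add: span_diff span_sum span_mul span_base)
  ultimately have "orthogonal (x - (\<Sum>b\<in>B. (b \<bullet> x) *\<^sub>R b)) (x - (\<Sum>b\<in>B. (b \<bullet> x) *\<^sub>R b))"
    by (rule orthogonal_to_span[rotated])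
  then show ?thesis by (simp add: orthogonal_def)
qed

definition outer :: "real^'n \<Rightarrow> real^'n^'n" where
  "outer b = (\<chi> i j. b$i * b$j)"

lemma outer_mult_vec: "outer b *v x = (b \<bullet> x) *\<^sub>R b"
proof -
  have "(outer b *v x) $ i = b$i * (\<Sum>j\<in>UNIV. b$j * x$j)" for i
    by (simp add: outer_def matrix_vector_mult_def sum_distrib_left mult.assoc)
  then show ?thesis by (simp add: vec_eq_iff inner_vec_def mult.commute)
qed

lemma sum_matrix_vector_mult: "finite S \<Longrightarrow> (\<Sum>i\<in>S. f i) *v x = (\<Sum>i\<in>S. f i *v x)"
  by (induction S rule: finite_induct) (simp_all add: matrix_vector_mult_add_rdistrib)

locale orthonormal_eigenbasis =
  fixes A :: "(real^'n^'n) set" and B :: "(real^'n) set"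
  assumes subspace_A: "subspace A"
    and finite_B: "finite B" and orthogonal_B: "pairwise orthogonal B"
    and norm_B: "\<forall>b\<in>B. norm b = 1" and span_B: "span B = UNIV"
    and eigenvector_B: "\<forall>b\<in>B. \<forall>X\<in>A. \<exists>c. X *v b = c *\<^sub>R b"
begin

definition eigval :: "real^'n \<Rightarrow> real^'n^'n \<Rightarrow> real" where
  "eigval b X = b \<bullet> (X *v b)"

definition coord_support :: "real^'n \<Rightarrow> (real^'n) set" where
  "coord_support v = {b \<in> B. b \<bullet> v \<noteq> 0}"

lemma expansion: "x = (\<Sum>b\<in>B. (b \<bullet> x) *\<^sub>R b)"
  using orthonormal_expansion[OF finite_B orthogonal_B norm_B] span_B by auto

lemma inner_basis: "b \<in> B \<Longrightarrow> b' \<in> B \<Longrightarrow> b' \<bullet> b = (if b = b' then 1 else 0)"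
  using orthogonal_B norm_B by (auto simp: pairwise_def orthogonal_def dot_square_norm)

lemma inner_sum_basis: "b' \<in> B \<Longrightarrow> b' \<bullet> (\<Sum>b\<in>B. f b *\<^sub>R b) = f b'"
  using finite_B
  by (simp add: inner_sum_right inner_basis if_distrib sum.delta' cong: sum.cong if_cong)

lemma eq_if_coords_eq:
  assumes "\<And>b. b \<in> B \<Longrightarrow> b \<bullet> x = b \<bullet> y"
  shows "x = y"
proof -
  have "x = (\<Sum>b\<in>B. (b \<bullet> x) *\<^sub>R b)" by (rule expansion)
  also have "\<dots> = (\<Sum>b\<in>B. (b \<bullet> y) *\<^sub>R b)" using assms by simp
  also have "\<dots> = y" by (rule expansion[symmetric])
  finally show ?thesis .
qed

lemma inner_self_eq_sum: "x \<bullet> x = (\<Sum>b\<in>B. (b \<bullet> x)\<^sup>2)"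
proof -
  have "x \<bullet> x = (\<Sum>b\<in>B. (b \<bullet> x) *\<^sub>R b) \<bullet> x"
    by (rule arg_cong[where f="\<lambda>y. y \<bullet> x", OF expansion])
  also have "\<dots> = (\<Sum>b\<in>B. (b \<bullet> x)\<^sup>2)" by (simp add: inner_sum_left power2_eq_square)
  finally show ?thesis .
qed

lemma mult_eigenvector:
  assumes "b \<in> B" "X \<in> A"
  shows "X *v b = eigval b X *\<^sub>R b"
proof -
  obtain c where c: "X *v b = c *\<^sub>R b" using eigenvector_B assms by blast
  moreover have "b \<bullet> b = 1" using norm_B assms(1) by (simp add: dot_square_norm)
  ultimately show ?thesis by (simp add: eigval_def)
qed

lemma linear_eigval: "linear (eigval b)"
  by (rule linearI) (simp_all add: eigval_def matrix_vector_mult_add_rdistrib inner_add_right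
      scaleR_matrix_vector_assoc[symmetric])

lemma inner_mult:
  assumes "b \<in> B" "X \<in> A"
  shows "b \<bullet> (X *v x) = eigval b X * (b \<bullet> x)"
proof -
  have "X *v x = X *v (\<Sum>b\<in>B. (b \<bullet> x) *\<^sub>R b)"
    by (rule arg_cong[where f="\<lambda>y. X *v y", OF expansion])
  also have "\<dots> = (\<Sum>b'\<in>B. (eigval b' X * (b' \<bullet> x)) *\<^sub>R b')"
    using assms(2) by (simp add: vec.sum matrix_vector_mult_scaleR mult_eigenvector mult.commute
        cong: sum.cong)
  finally show ?thesis using assms(1) by (simp add: inner_sum_basis)
qed

lemma inner_matpow:
  assumes "b \<in> B" "X \<in> A"
  shows "b \<bullet> (matpow X k *v x) = eigval b X ^ k * (b \<bullet> x)"
  by (induction k)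
    (simp_all add: matpow_def assms inner_mult matrix_vector_mul_assoc[symmetric])

lemma matpow_eq_sum_outer:
  assumes "X \<in> A"
  shows "matpow X k = (\<Sum>b\<in>B. eigval b X ^ k *\<^sub>R outer b)"
proof -
  have "matpow X k *v x = (\<Sum>b\<in>B. eigval b X ^ k *\<^sub>R outer b) *v x" for x
  proof (rule eq_if_coords_eq)
    fix b assume "b \<in> B"
    then show "b \<bullet> (matpow X k *v x) = b \<bullet> ((\<Sum>b\<in>B. eigval b X ^ k *\<^sub>R outer b) *v x)"
      using assms finite_B
      by (simp add: inner_matpow sum_matrix_vector_mult scaleR_matrix_vector_assoc[symmetric]
          outer_mult_vec inner_sum_basis)
  qed
  then show ?thesis by (simp add: matrix_eq)
qed

lemma mexp_eq_sum_outer: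
  assumes "X \<in> A"
  shows "mexp X = (\<Sum>b\<in>B. exp (eigval b X) *\<^sub>R outer b)"
proof -
  have "(\<lambda>k. (1 / fact k) *\<^sub>R matpow X k) = (\<lambda>k. \<Sum>b\<in>B. (eigval b X ^ k /\<^sub>R fact k) *\<^sub>R outer b)"
    using assms by (simp add: matpow_eq_sum_outer scaleR_sum_right divide_inverse_commute)
  moreover have "(\<lambda>k. \<Sum>b\<in>B. (eigval b X ^ k /\<^sub>R fact k) *\<^sub>R outer b)
      sums (\<Sum>b\<in>B. exp (eigval b X) *\<^sub>R outer b)"
    by (intro sums_sum sums_scaleR_left exp_converges)
  ultimately show ?thesis unfolding mexp_def by (simp add: sums_iff)
qed

lemma inner_mexp:
  assumes "b \<in> B" "X \<in> A"
  shows "b \<bullet> (mexp X *v x) = exp (eigval b X) * (b \<bullet> x)"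
  using assms finite_B
  by (simp add: mexp_eq_sum_outer sum_matrix_vector_mult scaleR_matrix_vector_assoc[symmetric]
      outer_mult_vec inner_sum_basis)

lemma mexp_add_mult_vec:
  assumes "X \<in> A" "Y \<in> A"
  shows "mexp (X + Y) *v x = mexp X *v (mexp Y *v x)"
proof (rule eq_if_coords_eq)
  fix b assume "b \<in> B"
  moreover have "X + Y \<in> A" using assms subspace_A by (simp add: subspace_add)
  ultimately show "b \<bullet> (mexp (X + Y) *v x) = b \<bullet> (mexp X *v (mexp Y *v x))"
    using assms by (simp add: inner_mexp linear_add[OF linear_eigval] exp_add)
qed

lemma quadratic_form_eq_sum:
  assumes "X \<in> A"
  shows "(X *v x) \<bullet> x = (\<Sum>b\<in>B. eigval b X * (b \<bullet> x)\<^sup>2)"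
proof -
  have "(X *v x) \<bullet> x = (\<Sum>b\<in>B. (b \<bullet> (X *v x)) *\<^sub>R b) \<bullet> x"
    by (rule arg_cong[where f="\<lambda>y. y \<bullet> x", OF expansion])
  also have "\<dots> = (\<Sum>b\<in>B. eigval b X * (b \<bullet> x)\<^sup>2)"
    using assms by (simp add: inner_sum_left inner_mult power2_eq_square mult.assoc cong: sum.cong)
  finally show ?thesis .
qed

end

lemma (in commuting_symmetric_matrices) exists_orthonormal_eigenbasis:
  assumes "subspace A"
  obtains B where "orthonormal_eigenbasis A B"
proof -
  have "invariant_subspace A UNIV" by (simp add: invariant_subspace_def)
  from orthonormal_common_eigenbasis[OF this] obtain B where "finite B" "pairwise orthogonal B"
    "\<forall>b\<in>B. norm b = 1" "span B = UNIV" "\<forall>b\<in>B. \<forall>X\<in>A. \<exists>c. X *v b = c *\<^sub>R b"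
    by blast
  with assms have "orthonormal_eigenbasis A B" by unfold_locales
  then show ?thesis by (rule that)
qed

section \<open>Polyhedral cones in the dual of a subspace\<close>

lemma sum_scaleR_linear_on_subspace:
  assumes a: "subspace a" and l: "\<forall>\<xi>\<in>a. \<forall>\<eta>\<in>a. \<forall>c::real. l (c *\<^sub>R \<xi> + \<eta>) = c * l \<xi> + l \<eta>"
    and "finite E" "E \<subseteq> a"
  shows "l (\<Sum>e\<in>E. c e *\<^sub>R e) = (\<Sum>e\<in>E. c e * l e)"
  using \<open>finite E\<close> \<open>E \<subseteq> a\<close>
proof (induction E rule: finite_induct)
  case empty
  have "l (1 *\<^sub>R 0 + 0) = 1 * l 0 + l 0" using l subspace_0[OF a] by blast
  then show ?case by simp
next
  case (insert e E)
  then have "(\<Sum>e\<in>E. c e *\<^sub>R e) \<in> a" using a by (intro subspace_sum subspace_mul) auto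
  then show ?case using insert l by auto
qed

lemma inner_representation_on_subspace:
  fixes a :: "'a::euclidean_space set"
  assumes a: "subspace a" and l: "\<forall>\<xi>\<in>a. \<forall>\<eta>\<in>a. \<forall>c::real. l (c *\<^sub>R \<xi> + \<eta>) = c * l \<xi> + l \<eta>"
  shows "\<exists>r\<in>a. \<forall>\<xi>\<in>a. l \<xi> = \<xi> \<bullet> r"
proof -
  obtain E where E: "E \<subseteq> a" "pairwise orthogonal E" "\<And>x. x \<in> E \<Longrightarrow> norm x = 1"
    "independent E" "span E = a"
    using orthonormal_basis_subspace[OF a] by metis
  have "finite E" using E(4) independent_imp_finite by blast
  define r where "r = (\<Sum>e\<in>E. l e *\<^sub>R e)"
  have "l \<xi> = \<xi> \<bullet> r" if "\<xi> \<in> a" for \<xi>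
  proof -
    have "l \<xi> = l (\<Sum>e\<in>E. (e \<bullet> \<xi>) *\<^sub>R e)"
      using orthonormal_expansion[OF \<open>finite E\<close> E(2)] E(3,5) that by auto
    also have "\<dots> = (\<Sum>e\<in>E. (e \<bullet> \<xi>) * l e)"
      by (rule sum_scaleR_linear_on_subspace[OF a l \<open>finite E\<close> E(1)])
    also have "\<dots> = \<xi> \<bullet> r" by (simp add: r_def inner_sum_right inner_commute mult.commute)
    finally show ?thesis .
  qed
  moreover have "r \<in> a" unfolding r_def using E(1) a by (intro subspace_sum subspace_mul) auto
  ultimately show ?thesis by blast
qed

text \<open>The element of \<open>a\<^sup>*\<close> represented by \<open>\<rho>\<close> through the trace form \<open>\<langle>\<xi>, \<rho>\<rangle>\<close>.\<close>

definition inner_dual :: "(real^'n^'n) set \<Rightarrow> real^'n^'n \<Rightarrow> (real^'n^'n \<Rightarrow> real)" where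
  "inner_dual a \<rho> = (\<lambda>\<xi>. if \<xi> \<in> a then \<xi> \<bullet> \<rho> else 0)"

lemma inner_dual_mem_adual: "subspace a \<Longrightarrow> inner_dual a \<rho> \<in> adual a"
  by (auto simp: adual_def inner_dual_def subspace_add subspace_mul inner_add_left)

lemma adual_imp_inner_dual:
  assumes "subspace a" "l \<in> adual a"
  obtains \<rho> where "\<rho> \<in> a" "l = inner_dual a \<rho>"
proof -
  have "\<forall>\<xi>\<in>a. \<forall>\<eta>\<in>a. \<forall>c::real. l (c *\<^sub>R \<xi> + \<eta>) = c * l \<xi> + l \<eta>"
    using assms(2) by (simp add: adual_def)
  then obtain \<rho> where "\<rho> \<in> a" "\<forall>\<xi>\<in>a. l \<xi> = \<xi> \<bullet> \<rho>"
    using inner_representation_on_subspace[OF assms(1)] by blast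
  moreover from this have "l = inner_dual a \<rho>"
    using assms(2) by (auto simp: adual_def inner_dual_def)
  ultimately show ?thesis using that by blast
qed

lemma polyhedron_convex_cone_eq_halfspaces:
  fixes K :: "'a::euclidean_space set"
  assumes "polyhedron K" "convex_cone K"
  obtains F where "finite F" "K = {x. \<forall>\<alpha>\<in>F. \<alpha> \<bullet> x \<le> 0}"
proof -
  obtain H \<alpha> \<beta> where H: "finite H" "K = \<Inter> H"
    and halfspace: "\<And>h. h \<in> H \<Longrightarrow> h = {x. \<alpha> h \<bullet> x \<le> \<beta> h}"
    using assms(1) unfolding polyhedron_def by metis
  have mem_h: "x \<in> h \<longleftrightarrow> \<alpha> h \<bullet> x \<le> \<beta> h" if "h \<in> H" for h x
    using arg_cong[where f="\<lambda>S. x \<in> S", OF halfspace[OF that]] by simp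
  have mem_K: "x \<in> K \<longleftrightarrow> (\<forall>h\<in>H. \<alpha> h \<bullet> x \<le> \<beta> h)" for x
    using H(2) mem_h by blast
  have \<beta>: "0 \<le> \<beta> h" if "h \<in> H" for h
    using convex_cone_contains_0[OF assms(2)] mem_K that by fastforce
  have "x \<in> K \<longleftrightarrow> (\<forall>h\<in>H. \<alpha> h \<bullet> x \<le> 0)" for x
  proof
    assume x: "x \<in> K"
    show "\<forall>h\<in>H. \<alpha> h \<bullet> x \<le> 0"
    proof (rule ballI, rule ccontr)
      fix h assume h: "h \<in> H" and pos: "\<not> \<alpha> h \<bullet> x \<le> 0"
      define s where "s = (\<beta> h + 1) / (\<alpha> h \<bullet> x)"
      have "s \<ge> 0" using \<beta>[OF h] pos by (simp add: s_def)
      then have "\<alpha> h \<bullet> (s *\<^sub>R x) \<le> \<beta> h"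
        using convex_cone_scaleR[OF assms(2) _ x] mem_K h by blast
      moreover have "\<alpha> h \<bullet> (s *\<^sub>R x) = \<beta> h + 1" using pos by (simp add: s_def)
      ultimately show False by simp
    qed
  next
    assume "\<forall>h\<in>H. \<alpha> h \<bullet> x \<le> 0"
    then show "x \<in> K" using mem_K \<beta> by force
  qed
  then have "K = {x. \<forall>\<alpha>'\<in>\<alpha> ` H. \<alpha>' \<bullet> x \<le> 0}" by blast
  then show ?thesis using that H(1) by blast
qed

lemma polyhedral_inner_dual_image:
  assumes a: "subspace a" and K: "polyhedron K" "convex_cone K" "K \<subseteq> a"
  shows "polyhedral a (inner_dual a ` K)"
proof -
  obtain F where F: "finite F" "K = {x. \<forall>\<alpha>\<in>F. \<alpha> \<bullet> x \<le> 0}"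
    using polyhedron_convex_cone_eq_halfspaces[OF K(1,2)] by blast
  have "\<exists>r\<in>a. \<forall>\<xi>\<in>a. \<xi> \<bullet> \<alpha> = \<xi> \<bullet> r" for \<alpha>
    using inner_representation_on_subspace[OF a] by (simp add: inner_add_left)
  then obtain r where r: "\<And>\<alpha>. r \<alpha> \<in> a" "\<And>\<alpha> \<xi>. \<xi> \<in> a \<Longrightarrow> \<xi> \<bullet> \<alpha> = \<xi> \<bullet> r \<alpha>"
    by metis
  have dual_r: "inner_dual a \<rho> (r \<alpha>) = \<alpha> \<bullet> \<rho>" if "\<rho> \<in> a" for \<rho> \<alpha>
  proof -
    have "inner_dual a \<rho> (r \<alpha>) = \<rho> \<bullet> r \<alpha>" by (simp add: inner_dual_def r(1) inner_commute)
    also have "\<dots> = \<rho> \<bullet> \<alpha>" using r(2)[OF that] by simp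
    finally show ?thesis by (simp add: inner_commute)
  qed
  have "inner_dual a ` K = {l \<in> adual a. \<forall>\<xi>\<in>r ` F. l \<xi> \<le> 0}"
  proof (intro equalityI subsetI)
    fix l assume "l \<in> inner_dual a ` K"
    then obtain \<rho> where \<rho>: "\<rho> \<in> K" "l = inner_dual a \<rho>" by blast
    then show "l \<in> {l \<in> adual a. \<forall>\<xi>\<in>r ` F. l \<xi> \<le> 0}"
      using F(2) K(3) dual_r inner_dual_mem_adual[OF a] by auto
  next
    fix l assume l: "l \<in> {l \<in> adual a. \<forall>\<xi>\<in>r ` F. l \<xi> \<le> 0}"
    then obtain \<rho> where \<rho>: "\<rho> \<in> a" "l = inner_dual a \<rho>"
      using adual_imp_inner_dual[OF a] by blast
    then have "\<rho> \<in> K" using l F(2) dual_r by auto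
    then show "l \<in> inner_dual a ` K" using \<rho>(2) by blast
  qed
  moreover have "finite (r ` F)" "r ` F \<subseteq> a" using F(1) r(1) by auto
  ultimately show ?thesis unfolding polyhedral_def by blast
qed

lemma sum_mem_convex_cone_hull:
  assumes "finite J" "\<And>j. j \<in> J \<Longrightarrow> 0 \<le> t j" "q ` J \<subseteq> S"
  shows "(\<Sum>j\<in>J. t j *\<^sub>R q j) \<in> convex_cone hull S"
  using assms
proof (induction J rule: finite_induct)
  case (insert j J)
  have "t j *\<^sub>R q j \<in> convex_cone hull S"
    using insert.prems by (intro convex_cone_hull_mul hull_inc) auto
  moreover have "(\<Sum>j\<in>J. t j *\<^sub>R q j) \<in> convex_cone hull S" using insert by auto
  ultimately show ?case using insert.hyps by (simp add: convex_cone_hull_add)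
qed (simp add: convex_cone_hull_contains_0)

lemma convex_cone_hull_image_finite_imp_sum:
  assumes "finite J" "\<rho> \<in> convex_cone hull (q ` J)"
  obtains t where "\<And>j. 0 \<le> t j" "\<rho> = (\<Sum>j\<in>J. t j *\<^sub>R q j)"
proof -
  define C where "C = {\<Sum>j\<in>J. t j *\<^sub>R q j | t. \<forall>j. 0 \<le> t j}"
  have "q ` J \<subseteq> C"
  proof
    fix y assume "y \<in> q ` J"
    then obtain i where i: "i \<in> J" "y = q i" by blast
    have "(\<Sum>j\<in>J. (if j = i then 1 else 0) *\<^sub>R q j) = q i"
      using assms(1) i(1) by (simp add: if_distrib[of "\<lambda>c. c *\<^sub>R _"] sum.delta' cong: if_cong)
    then show "y \<in> C"
      unfolding C_def using i by (intro CollectI exI[of _ "\<lambda>j. if j = i then 1 else 0"]) auto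
  qed
  moreover have "convex_cone C"
    unfolding convex_cone_iff
  proof (intro conjI ballI allI impI)
    show "0 \<in> C" unfolding C_def by (auto intro!: exI[of _ "\<lambda>j. 0"])
    fix x y assume "x \<in> C" "y \<in> C"
    then obtain s t where "\<forall>j. 0 \<le> s j" "\<forall>j. 0 \<le> t j"
      "x = (\<Sum>j\<in>J. s j *\<^sub>R q j)" "y = (\<Sum>j\<in>J. t j *\<^sub>R q j)" unfolding C_def by blast
    then show "x + y \<in> C" unfolding C_def
      by (intro CollectI exI[of _ "\<lambda>j. s j + t j"]) (simp add: sum.distrib scaleR_add_left)
  next
    fix x and c :: real assume "x \<in> C" "0 \<le> c"
    then obtain t where "\<forall>j. 0 \<le> t j" "x = (\<Sum>j\<in>J. t j *\<^sub>R q j)" unfolding C_def by blast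
    then show "c *\<^sub>R x \<in> C" unfolding C_def using \<open>0 \<le> c\<close>
      by (intro CollectI exI[of _ "\<lambda>j. c * t j"]) (simp add: scaleR_sum_right)
  qed
  ultimately have "convex_cone hull (q ` J) \<subseteq> C" by (rule hull_minimal)
  then show ?thesis using assms(2) that unfolding C_def by blast
qed

lemma polyhedral_inner_dual_convex_cone_hull:
  assumes "subspace a" "finite Q" "Q \<subseteq> a"
  shows "polyhedral a (inner_dual a ` (convex_cone hull Q))"
proof (rule polyhedral_inner_dual_image[OF assms(1)])
  show "polyhedron (convex_cone hull Q)" using assms(2) by (rule polyhedron_convex_cone_hull)
  show "convex_cone (convex_cone hull Q)" by (rule convex_cone_convex_cone_hull)
  show "convex_cone hull Q \<subseteq> a"
    using assms(1,3) by (intro hull_minimal) (auto intro: subspace_imp_convex_cone)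
qed

section \<open>The moment map on a torus orbit closure\<close>

lemma exp_square_dominates_linear:
  fixes c t :: real
  assumes "c \<noteq> 0" "0 \<le> t"
  obtains L where "\<And>s. L + t * s \<le> (exp s * c)\<^sup>2 / 4"
proof (cases "t = 0")
  case True
  then show ?thesis using that[of 0] by simp
next
  case False
  define P where "P = c\<^sup>2 / 4"
  define K where "K = t / (2 * P)"
  have "P > 0" "K > 0" using assms False by (simp_all add: P_def K_def)
  have "(t / 2) * (1 - ln K) + t * s \<le> (exp s * c)\<^sup>2 / 4" for s
  proof -
    have PK: "P * K = t / 2" using \<open>P > 0\<close> by (simp add: K_def)
    have "(t / 2) * (1 - ln K) + t * s = (P * K) * (1 + (2 * s - ln K))"
      unfolding PK by (simp add: field_simps)
    also have "\<dots> \<le> (P * K) * exp (2 * s - ln K)"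
      using \<open>P > 0\<close> \<open>K > 0\<close> exp_ge_add_one_self by (simp add: mult_left_mono)
    also have "\<dots> = P * exp (2 * s)" using \<open>K > 0\<close> by (simp add: exp_diff)
    also have "\<dots> = (exp s * c)\<^sup>2 / 4" by (simp add: P_def power_mult_distrib exp_double)
    finally show ?thesis .
  qed
  then show ?thesis by (rule that)
qed

lemma minimising_sequence_with_convergent_image:
  fixes F :: "'a \<Rightarrow> real" and u :: "'a \<Rightarrow> 'b::heine_borel"
  assumes "S \<noteq> {}" and bounded_below: "\<And>\<xi>. \<xi> \<in> S \<Longrightarrow> L \<le> F \<xi>"
    and bounded_sublevel: "\<And>M. bounded (u ` {\<xi> \<in> S. F \<xi> \<le> M})"
  obtains \<xi> w where "\<And>k. \<xi> k \<in> S" "(\<lambda>k. F (\<xi> k)) \<longlonglongrightarrow> Inf (F ` S)" "(\<lambda>k. u (\<xi> k)) \<longlonglongrightarrow> w"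
proof -
  define m where "m = Inf (F ` S)"
  have bdd: "bdd_below (F ` S)" using bounded_below by (rule bdd_belowI2)
  have "\<exists>\<xi>\<in>S. F \<xi> < m + 1 / Suc k" for k
    using cInf_less_iff[of "F ` S" "m + 1 / Suc k"] assms(1) bdd by (simp add: m_def)
  then obtain \<xi>0 where \<xi>0: "\<And>k. \<xi>0 k \<in> S" "\<And>k. F (\<xi>0 k) < m + 1 / Suc k" by metis
  have F_ge: "m \<le> F (\<xi>0 k)" for k unfolding m_def using bdd \<xi>0(1) by (simp add: cInf_lower)
  have F_le: "F (\<xi>0 k) \<le> m + 1 / Suc k" for k using \<xi>0(2) less_imp_le by blast
  have "(\<lambda>k. m + 1 / Suc k) \<longlonglongrightarrow> m"
    using tendsto_add[OF tendsto_const LIMSEQ_inverse_real_of_nat] by (simp add: inverse_eq_divide)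
  then have F_lim: "(\<lambda>k. F (\<xi>0 k)) \<longlonglongrightarrow> m"
    by (rule tendsto_sandwich[rotated 2, OF tendsto_const])
      (use F_ge F_le in \<open>auto intro: always_eventually\<close>)
  have "F (\<xi>0 k) \<le> m + 1" for k
    using F_le[of k] by (simp add: order_trans[OF _ add_left_mono[of "1 / Suc k" 1]])
  then have "range (\<lambda>k. u (\<xi>0 k)) \<subseteq> u ` {\<xi> \<in> S. F \<xi> \<le> m + 1}"
    using \<xi>0(1) by blast
  then have "bounded (range (\<lambda>k. u (\<xi>0 k)))" using bounded_sublevel bounded_subset by blast
  then obtain w r where r: "strict_mono r" "((\<lambda>k. u (\<xi>0 k)) \<circ> r) \<longlonglongrightarrow> w"
    using bounded_imp_convergent_subsequence by blast
  show ?thesis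
  proof (rule that[of "\<xi>0 \<circ> r" w])
    show "(\<xi>0 \<circ> r) k \<in> S" for k using \<xi>0(1) by simp
    show "(\<lambda>k. F ((\<xi>0 \<circ> r) k)) \<longlonglongrightarrow> Inf (F ` S)"
      using LIMSEQ_subseq_LIMSEQ[OF F_lim r(1)] by (simp add: m_def o_def)
    show "(\<lambda>k. u ((\<xi>0 \<circ> r) k)) \<longlonglongrightarrow> w" using r(2) by (simp add: o_def)
  qed
qed

lemma inner_eq_0_closure:
  assumes "\<And>y. y \<in> S \<Longrightarrow> b \<bullet> y = 0" "w \<in> closure S"
  shows "b \<bullet> w = 0"
proof -
  have "closure S \<subseteq> {y. b \<bullet> y = 0}"
    using assms(1) by (intro closure_minimal closed_hyperplane) auto
  then show ?thesis using assms(2) by auto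
qed

context orthonormal_eigenbasis
begin

definition weight :: "real^'n \<Rightarrow> real^'n^'n" where
  "weight b = (SOME q. q \<in> A \<and> (\<forall>X\<in>A. eigval b X = X \<bullet> q))"

lemma weight: "weight b \<in> A" "X \<in> A \<Longrightarrow> eigval b X = X \<bullet> weight b"
proof -
  have "\<forall>X\<in>A. \<forall>Y\<in>A. \<forall>c::real. eigval b (c *\<^sub>R X + Y) = c * eigval b X + eigval b Y"
    using linear_eigval[of b] by (simp add: linear_add linear_scale)
  then have "\<exists>q. q \<in> A \<and> (\<forall>X\<in>A. eigval b X = X \<bullet> q)"
    using inner_representation_on_subspace[OF subspace_A] by blast
  then have "weight b \<in> A \<and> (\<forall>X\<in>A. eigval b X = X \<bullet> weight b)"
    unfolding weight_def by (rule someI_ex)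
  then show "weight b \<in> A" "X \<in> A \<Longrightarrow> eigval b X = X \<bullet> weight b" by auto
qed

lemma sum_coord_support:
  assumes "coord_support w \<subseteq> J" "J \<subseteq> B"
  shows "(\<Sum>b\<in>B. f b * (b \<bullet> w)\<^sup>2) = (\<Sum>b\<in>J. f b * (b \<bullet> w)\<^sup>2)"
  using assms finite_B by (intro sum.mono_neutral_right) (auto simp: coord_support_def)

lemma mu_eq_inner_dual:
  assumes "coord_support w \<subseteq> J" "J \<subseteq> B"
  shows "mu A w = inner_dual A (\<Sum>b\<in>J. (b \<bullet> w)\<^sup>2 *\<^sub>R weight b)"
proof
  fix \<xi> show "mu A w \<xi> = inner_dual A (\<Sum>b\<in>J. (b \<bullet> w)\<^sup>2 *\<^sub>R weight b) \<xi>"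
  proof (cases "\<xi> \<in> A")
    case True
    have "(\<xi> *v w) \<bullet> w = (\<Sum>b\<in>J. eigval b \<xi> * (b \<bullet> w)\<^sup>2)"
      using quadratic_form_eq_sum[OF True] sum_coord_support[OF assms] by simp
    also have "\<dots> = \<xi> \<bullet> (\<Sum>b\<in>J. (b \<bullet> w)\<^sup>2 *\<^sub>R weight b)"
      using True by (simp add: inner_sum_right weight(2) mult.commute)
    finally show ?thesis using True by (simp add: mu_def inner_dual_def)
  qed (simp add: mu_def inner_dual_def)
qed

lemma inner_self_mexp:
  assumes "\<xi> \<in> A"
  shows "(mexp \<xi> *v v) \<bullet> (mexp \<xi> *v v) = (\<Sum>b\<in>B. (exp (eigval b \<xi>) * (b \<bullet> v))\<^sup>2)"
  using assms by (simp add: inner_self_eq_sum[of "mexp \<xi> *v v"] inner_mexp)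

text \<open>The Kempf--Ness function of \<open>v\<close> shifted by the linear form \<open>\<Sum> t\<^sub>b \<lambda>\<^sub>b\<close>; by the first order
  condition, the moment map takes the value \<open>\<Sum> t\<^sub>b \<lambda>\<^sub>b\<close> at the limit of a minimising sequence.\<close>

definition kempf_ness :: "real^'n \<Rightarrow> (real^'n \<Rightarrow> real) \<Rightarrow> real^'n^'n \<Rightarrow> real" where
  "kempf_ness v t \<xi> = (mexp \<xi> *v v) \<bullet> (mexp \<xi> *v v) / 2 - (\<Sum>b\<in>coord_support v. t b * eigval b \<xi>)"

lemma kempf_ness_coercive:
  assumes "\<And>b. 0 \<le> t b"
  obtains L where "\<And>\<xi>. \<xi> \<in> A \<Longrightarrow> L + (mexp \<xi> *v v) \<bullet> (mexp \<xi> *v v) / 4 \<le> kempf_ness v t \<xi>"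
proof -
  have "\<forall>b\<in>coord_support v. \<exists>L. \<forall>s. L + t b * s \<le> (exp s * (b \<bullet> v))\<^sup>2 / 4"
  proof
    fix b assume "b \<in> coord_support v"
    then have "b \<bullet> v \<noteq> 0" by (simp add: coord_support_def)
    then obtain L where "\<And>s. L + t b * s \<le> (exp s * (b \<bullet> v))\<^sup>2 / 4"
      using exp_square_dominates_linear[OF _ assms[of b]] by blast
    then show "\<exists>L. \<forall>s. L + t b * s \<le> (exp s * (b \<bullet> v))\<^sup>2 / 4" by blast
  qed
  from bchoice[OF this] obtain L
    where L: "\<forall>b\<in>coord_support v. \<forall>s. L b + t b * s \<le> (exp s * (b \<bullet> v))\<^sup>2 / 4"
    by blast
  show ?thesis
  proof (rule that)
    fix \<xi> assume "\<xi> \<in> A"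
    have "(\<Sum>b\<in>coord_support v. L b) + (\<Sum>b\<in>coord_support v. t b * eigval b \<xi>)
        \<le> (\<Sum>b\<in>coord_support v. (exp (eigval b \<xi>) * (b \<bullet> v))\<^sup>2 / 4)"
      unfolding sum.distrib[symmetric] using L by (intro sum_mono) blast
    also have "\<dots> = (\<Sum>b\<in>B. (exp (eigval b \<xi>) * (b \<bullet> v))\<^sup>2) / 4"
      unfolding sum_divide_distrib using finite_B
      by (intro sum.mono_neutral_left) (auto simp: coord_support_def)
    also have "\<dots> = (mexp \<xi> *v v) \<bullet> (mexp \<xi> *v v) / 4"
      by (simp add: inner_self_mexp[OF \<open>\<xi> \<in> A\<close>])
    finally show "(\<Sum>b\<in>coord_support v. L b) + (mexp \<xi> *v v) \<bullet> (mexp \<xi> *v v) / 4 \<le> kempf_ness v t \<xi>"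
      by (simp add: kempf_ness_def)
  qed
qed

lemma kempf_ness_add:
  assumes "\<xi> \<in> A" "\<eta> \<in> A"
  shows "kempf_ness v t (\<eta> + \<xi>) - kempf_ness v t \<xi> =
    (mexp \<eta> *v (mexp \<xi> *v v)) \<bullet> (mexp \<eta> *v (mexp \<xi> *v v)) / 2
    - (mexp \<xi> *v v) \<bullet> (mexp \<xi> *v v) / 2 - (\<Sum>b\<in>coord_support v. t b * eigval b \<eta>)"
  using assms
  by (simp add: kempf_ness_def mexp_add_mult_vec linear_add[OF linear_eigval] distrib_left
      sum.distrib)

lemma first_order_condition:
  assumes "\<eta> \<in> A"
    and nonneg: "\<And>s. y \<bullet> y \<le> (mexp (s *\<^sub>R \<eta>) *v y) \<bullet> (mexp (s *\<^sub>R \<eta>) *v y) - 2 * s * c"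
  shows "(\<eta> *v y) \<bullet> y = c"
proof -
  define \<phi> where "\<phi> s = (\<Sum>b\<in>B. (b \<bullet> y)\<^sup>2 * exp (s * (2 * eigval b \<eta>))) - 2 * s * c" for s
  have "\<phi> s = (mexp (s *\<^sub>R \<eta>) *v y) \<bullet> (mexp (s *\<^sub>R \<eta>) *v y) - 2 * s * c" for s
  proof -
    have "s *\<^sub>R \<eta> \<in> A" using assms(1) subspace_A by (simp add: subspace_mul)
    have "(exp (eigval b (s *\<^sub>R \<eta>)) * (b \<bullet> y))\<^sup>2 = (b \<bullet> y)\<^sup>2 * exp (s * (2 * eigval b \<eta>))" for b
      by (simp add: linear_scale[OF linear_eigval] power_mult_distrib exp_double[symmetric]
          ac_simps)
    then show ?thesis by (simp add: \<phi>_def inner_self_mexp[OF \<open>s *\<^sub>R \<eta> \<in> A\<close>])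
  qed
  then have "\<phi> 0 \<le> \<phi> s" for s
    using nonneg[of s] by (simp add: \<phi>_def inner_self_eq_sum[of y])
  moreover have "(\<phi> has_real_derivative (\<Sum>b\<in>B. 2 * (eigval b \<eta> * (b \<bullet> y)\<^sup>2)) - 2 * c) (at 0)"
    unfolding \<phi>_def by (auto intro!: derivative_eq_intros sum.cong)
  ultimately have "(\<Sum>b\<in>B. 2 * (eigval b \<eta> * (b \<bullet> y)\<^sup>2)) - 2 * c = 0"
    by (intro DERIV_local_min[of \<phi> _ 0 1]) auto
  then have "c = (\<Sum>b\<in>B. eigval b \<eta> * (b \<bullet> y)\<^sup>2)"
    by (simp add: sum_distrib_left[symmetric])
  then show ?thesis using quadratic_form_eq_sum[OF assms(1)] by simp
qed

lemma kempf_ness_minimising_sequence: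
  assumes "\<And>b. 0 \<le> t b"
  obtains \<xi> w where "\<And>k. \<xi> k \<in> A" "bdd_below (kempf_ness v t ` A)"
    "(\<lambda>k. kempf_ness v t (\<xi> k)) \<longlonglongrightarrow> Inf (kempf_ness v t ` A)" "(\<lambda>k. mexp (\<xi> k) *v v) \<longlonglongrightarrow> w"
proof -
  let ?u = "\<lambda>\<xi>. mexp \<xi> *v v"
  let ?F = "kempf_ness v t"
  obtain L where L: "\<And>\<xi>. \<xi> \<in> A \<Longrightarrow> L + ?u \<xi> \<bullet> ?u \<xi> / 4 \<le> ?F \<xi>"
    using kempf_ness_coercive[where t = t and v = v, OF assms] by blast
  have F_ge: "L \<le> ?F \<xi>" if "\<xi> \<in> A" for \<xi> using L[OF that] inner_ge_zero[of "?u \<xi>"] by linarith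
  have sublevel: "bounded (?u ` {\<xi> \<in> A. ?F \<xi> \<le> M})" for M
    unfolding bounded_iff
  proof (intro exI ballI)
    fix y assume "y \<in> ?u ` {\<xi> \<in> A. ?F \<xi> \<le> M}"
    then obtain \<xi> where "\<xi> \<in> A" "?F \<xi> \<le> M" "y = ?u \<xi>" by blast
    then have "y \<bullet> y \<le> 4 * (M - L)" using L[of \<xi>] by simp
    then show "norm y \<le> sqrt (4 * (M - L))" by (simp add: norm_eq_sqrt_inner)
  qed
  have "A \<noteq> {}" using subspace_0[OF subspace_A] by blast
  then obtain \<xi> w where "\<And>k. \<xi> k \<in> A" "(\<lambda>k. ?F (\<xi> k)) \<longlonglongrightarrow> Inf (?F ` A)"
    "(\<lambda>k. ?u (\<xi> k)) \<longlonglongrightarrow> w"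
    using minimising_sequence_with_convergent_image[OF _ F_ge sublevel] by blast
  moreover have "bdd_below (?F ` A)" using F_ge by (rule bdd_belowI2)
  ultimately show ?thesis using that by blast
qed

lemma kempf_ness_minimising_limit:
  assumes \<xi>: "\<And>k. \<xi> k \<in> A" "bdd_below (kempf_ness v t ` A)"
      "(\<lambda>k. kempf_ness v t (\<xi> k)) \<longlonglongrightarrow> Inf (kempf_ness v t ` A)"
    and u_lim: "(\<lambda>k. mexp (\<xi> k) *v v) \<longlonglongrightarrow> w" and "\<eta> \<in> A"
  shows "w \<bullet> w \<le> (mexp (s *\<^sub>R \<eta>) *v w) \<bullet> (mexp (s *\<^sub>R \<eta>) *v w)
    - 2 * s * (\<Sum>b\<in>coord_support v. t b * eigval b \<eta>)"
proof -
  let ?u = "\<lambda>\<xi>. mexp \<xi> *v v"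
  let ?F = "kempf_ness v t"
  let ?c = "\<lambda>\<eta>. \<Sum>b\<in>coord_support v. t b * eigval b \<eta>"
  define G where "G y = (mexp (s *\<^sub>R \<eta>) *v y) \<bullet> (mexp (s *\<^sub>R \<eta>) *v y) / 2 - y \<bullet> y / 2 - s * ?c \<eta>"
    for y
  have s\<eta>: "s *\<^sub>R \<eta> \<in> A" using \<open>\<eta> \<in> A\<close> subspace_A by (simp add: subspace_mul)
  have c_scale: "?c (s *\<^sub>R \<eta>) = s * ?c \<eta>"
    by (simp add: linear_scale[OF linear_eigval] sum_distrib_left mult.left_commute)
  have le: "Inf (?F ` A) - ?F (\<xi> k) \<le> G (?u (\<xi> k))" for k
  proof -
    have "s *\<^sub>R \<eta> + \<xi> k \<in> A" using s\<eta> \<xi>(1) subspace_A by (simp add: subspace_add)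
    then have "Inf (?F ` A) \<le> ?F (s *\<^sub>R \<eta> + \<xi> k)" using \<xi>(2) by (simp add: cInf_lower)
    also have "\<dots> = ?F (\<xi> k) + G (?u (\<xi> k))"
      using kempf_ness_add[OF \<xi>(1)[of k] s\<eta>, of v t] c_scale unfolding G_def by linarith
    finally show ?thesis by simp
  qed
  have lim_left: "(\<lambda>k. Inf (?F ` A) - ?F (\<xi> k)) \<longlonglongrightarrow> 0"
    using tendsto_diff[OF tendsto_const[of "Inf (?F ` A)"] \<xi>(3)] by simp
  have "(\<lambda>k. mexp (s *\<^sub>R \<eta>) *v ?u (\<xi> k)) \<longlonglongrightarrow> mexp (s *\<^sub>R \<eta>) *v w"
    by (rule isCont_tendsto_compose[OF matrix_vector_mult_linear_continuous_at u_lim])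
  then have lim_right: "(\<lambda>k. G (?u (\<xi> k))) \<longlonglongrightarrow> G w"
    unfolding G_def using u_lim
    by (intro tendsto_diff tendsto_divide tendsto_inner tendsto_const) simp_all
  have "0 \<le> G w" using LIMSEQ_le[OF lim_left lim_right] le by blast
  then show ?thesis by (simp add: G_def)
qed

lemma moment_map_attains_cone_point:
  assumes "\<And>b. 0 \<le> t b"
  obtains w where "w \<in> closure (orbit (mexp ` A) v)"
    and "\<And>\<eta>. \<eta> \<in> A \<Longrightarrow> (\<eta> *v w) \<bullet> w = (\<Sum>b\<in>coord_support v. t b * eigval b \<eta>)"
proof (rule kempf_ness_minimising_sequence[where t = t and v = v, OF assms])
  fix \<xi> w assume \<xi>: "\<And>k. \<xi> k \<in> A" "bdd_below (kempf_ness v t ` A)"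
      "(\<lambda>k. kempf_ness v t (\<xi> k)) \<longlonglongrightarrow> Inf (kempf_ness v t ` A)"
    and u_lim: "(\<lambda>k. mexp (\<xi> k) *v v) \<longlonglongrightarrow> w"
  show thesis
  proof (rule that)
    have "\<forall>k. mexp (\<xi> k) *v v \<in> orbit (mexp ` A) v" using \<xi>(1) by (simp add: orbit_def)
    then show "w \<in> closure (orbit (mexp ` A) v)"
      unfolding closure_sequential using u_lim by (intro exI[where x = "\<lambda>k. mexp (\<xi> k) *v v"]) simp
    show "(\<eta> *v w) \<bullet> w = (\<Sum>b\<in>coord_support v. t b * eigval b \<eta>)" if "\<eta> \<in> A" for \<eta>
      using that kempf_ness_minimising_limit[OF \<xi> u_lim that] by (rule first_order_condition)
  qed
qed

lemma coord_support_closure_orbit: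
  assumes "w \<in> closure (orbit (mexp ` A) v)"
  shows "coord_support w \<subseteq> coord_support v"
proof
  fix b assume "b \<in> coord_support w"
  then have b: "b \<in> B" "b \<bullet> w \<noteq> 0" by (auto simp: coord_support_def)
  show "b \<in> coord_support v"
  proof (rule ccontr)
    assume "b \<notin> coord_support v"
    then have "b \<bullet> v = 0" using b(1) by (simp add: coord_support_def)
    then have "b \<bullet> y = 0" if "y \<in> orbit (mexp ` A) v" for y
      using that b(1) by (auto simp: orbit_def inner_mexp)
    then have "b \<bullet> w = 0" using assms by (rule inner_eq_0_closure)
    then show False using b(2) by simp
  qed
qed

lemma mu_image_subset_cone:
  assumes "J \<subseteq> B" "\<And>w. w \<in> S \<Longrightarrow> coord_support w \<subseteq> J"
  shows "mu A ` S \<subseteq> inner_dual A ` (convex_cone hull (weight ` J))"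
proof
  fix l assume "l \<in> mu A ` S"
  then obtain w where "w \<in> S" "l = mu A w" by blast
  then have "l = inner_dual A (\<Sum>b\<in>J. (b \<bullet> w)\<^sup>2 *\<^sub>R weight b)"
    using mu_eq_inner_dual[OF assms(2) assms(1)] by simp
  moreover have "(\<Sum>b\<in>J. (b \<bullet> w)\<^sup>2 *\<^sub>R weight b) \<in> convex_cone hull (weight ` J)"
    using finite_subset[OF assms(1) finite_B] by (intro sum_mem_convex_cone_hull) auto
  ultimately show "l \<in> inner_dual A ` (convex_cone hull (weight ` J))" by blast
qed

lemma mu_closure_torus_orbit:
  "mu A ` closure (orbit (mexp ` A) v) =
    inner_dual A ` (convex_cone hull (weight ` coord_support v))"
proof
  show "mu A ` closure (orbit (mexp ` A) v) \<subseteq>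
      inner_dual A ` (convex_cone hull (weight ` coord_support v))"
    using coord_support_closure_orbit by (intro mu_image_subset_cone) (auto simp: coord_support_def)
  show "inner_dual A ` (convex_cone hull (weight ` coord_support v)) \<subseteq>
      mu A ` closure (orbit (mexp ` A) v)"
  proof
    fix l assume "l \<in> inner_dual A ` (convex_cone hull (weight ` coord_support v))"
    then obtain \<rho> where \<rho>: "\<rho> \<in> convex_cone hull (weight ` coord_support v)" "l = inner_dual A \<rho>"
      by blast
    have "finite (coord_support v)" using finite_B by (simp add: coord_support_def)
    then obtain t where t: "\<And>b. 0 \<le> t b" and \<rho>_eq: "\<rho> = (\<Sum>b\<in>coord_support v. t b *\<^sub>R weight b)"
      using convex_cone_hull_image_finite_imp_sum[OF _ \<rho>(1)] by blast
    obtain w where w: "w \<in> closure (orbit (mexp ` A) v)"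
      and moment: "\<And>\<eta>. \<eta> \<in> A \<Longrightarrow> (\<eta> *v w) \<bullet> w = (\<Sum>b\<in>coord_support v. t b * eigval b \<eta>)"
      using moment_map_attains_cone_point[where t = t and v = v, OF t] by blast
    have "mu A w = l"
    proof
      fix \<xi> show "mu A w \<xi> = l \<xi>"
      proof (cases "\<xi> \<in> A")
        case True
        then have "mu A w \<xi> = (\<Sum>b\<in>coord_support v. t b * eigval b \<xi>)" by (simp add: mu_def moment)
        also have "\<dots> = \<xi> \<bullet> \<rho>" using True by (simp add: \<rho>_eq inner_sum_right weight(2))
        finally show ?thesis using True by (simp add: \<rho>(2) inner_dual_def)
      qed (simp add: \<rho>(2) mu_def inner_dual_def)
    qed
    then show "l \<in> mu A ` closure (orbit (mexp ` A) v)" using w by blast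
  qed
qed

lemma polyhedral_weight_cone:
  "J \<subseteq> B \<Longrightarrow> polyhedral A (inner_dual A ` (convex_cone hull (weight ` J)))"
  using subspace_A finite_subset[OF _ finite_B] weight(1)
  by (intro polyhedral_inner_dual_convex_cone_hull) auto

end

context connected_matrix_group
begin

lemma orbit_subset_orbit:
  assumes "H \<subseteq> G" "v \<in> orbit G x"
  shows "orbit H v \<subseteq> orbit G x"
proof
  fix y assume "y \<in> orbit H v"
  then obtain h g where "h \<in> H" "g \<in> G" "y = h *v (g *v x)" using assms(2) by (auto simp: orbit_def)
  then have "h ** g \<in> G" "y = (h ** g) *v x"
    using assms(1) mult_mem by (auto simp: matrix_vector_mul_assoc)
  then show "y \<in> orbit G x" unfolding orbit_def by (rule rev_image_eqI)
qed

lemma exists_generic_orbit_point: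
  assumes "finite B"
  obtains v where "v \<in> orbit G x"
    and "\<And>b w. b \<in> B \<Longrightarrow> b \<bullet> v = 0 \<Longrightarrow> w \<in> closure (orbit G x) \<Longrightarrow> b \<bullet> w = 0"
proof -
  define J where "J = {b \<in> B. \<exists>g\<in>G. b \<bullet> (g *v x) \<noteq> 0}"
  have "linear (\<lambda>g. b \<bullet> (g *v x))" for b
    by (rule linearI) (simp_all add: matrix_vector_mult_add_rdistrib inner_add_right
        scaleR_matrix_vector_assoc[symmetric])
  moreover have "finite J" using assms by (simp add: J_def)
  moreover have "\<exists>g\<in>G. b \<bullet> (g *v x) \<noteq> 0" if "b \<in> J" for b using that by (simp add: J_def)
  moreover have "openin (top_of_set G) G" "G \<noteq> {}" using one_mem by auto
  ultimately obtain g where g: "g \<in> G" "\<forall>b\<in>J. b \<bullet> (g *v x) \<noteq> 0"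
    using exists_common_nonzero[of J "\<lambda>b g. b \<bullet> (g *v x)" G] by blast
  show ?thesis
  proof (rule that)
    show "g *v x \<in> orbit G x" using g(1) by (simp add: orbit_def)
    fix b w assume "b \<in> B" "b \<bullet> (g *v x) = 0" "w \<in> closure (orbit G x)"
    then have "b \<notin> J" using g(2) by blast
    then have "b \<bullet> y = 0" if "y \<in> orbit G x" for y
      using that \<open>b \<in> B\<close> by (auto simp: J_def orbit_def)
    then show "b \<bullet> w = 0" using \<open>w \<in> closure (orbit G x)\<close> by (rule inner_eq_0_closure)
  qed
qed

end

lemma abelian_subalg_commuting_symmetric:
  assumes "abelian_subalg a G"
  shows "commuting_symmetric_matrices a"
proof
  show "transpose X = X" if "X \<in> a" for X
    using assms that by (auto simp: abelian_subalg_def ppart_def)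
  show "X ** Y = Y ** X" if "X \<in> a" "Y \<in> a" for X Y
    using assms that by (auto simp: abelian_subalg_def)
qed

lemma abelian_subalg_mexp_subset:
  assumes "abelian_subalg a G"
  shows "mexp ` a \<subseteq> G"
proof
  fix g assume "g \<in> mexp ` a"
  then obtain X where "X \<in> a" "g = mexp X" by blast
  then have "\<forall>t. mexp (t *\<^sub>R X) \<in> G"
    using assms by (auto simp: abelian_subalg_def ppart_def lie_alg_def)
  then show "g \<in> G" using \<open>g = mexp X\<close> by (metis scaleR_one)
qed

theorem mainTheorem8:
  fixes G :: "(real^'n^'n) set" and a :: "(real^'n^'n) set" and x :: "real^'n"
  assumes "closed_transpose_subgroup G"
    and "G = {k ** mexp X | k X. k \<in> Kpart G \<and> X \<in> ppart G}"
    and "abelian_subalg a G"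
  shows "\<exists>v \<in> orbit G x.
           mu a ` closure (orbit G x) = mu a ` closure (orbit (mexp ` a) v) \<and>
           polyhedral a (mu a ` closure (orbit G x))"
proof -
  interpret connected_matrix_group G
    using assms(1) by unfold_locales (auto simp: closed_transpose_subgroup_def)
  interpret commuting_symmetric_matrices a
    using assms(3) by (rule abelian_subalg_commuting_symmetric)
  obtain B where "orthonormal_eigenbasis a B"
    using exists_orthonormal_eigenbasis assms(3) by (auto simp: abelian_subalg_def)
  then interpret orthonormal_eigenbasis a B .
  obtain v where v: "v \<in> orbit G x"
    and generic: "\<And>b w. b \<in> B \<Longrightarrow> b \<bullet> v = 0 \<Longrightarrow> w \<in> closure (orbit G x) \<Longrightarrow> b \<bullet> w = 0"
    using exists_generic_orbit_point[OF finite_B] by blast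
  have support: "coord_support w \<subseteq> coord_support v" if "w \<in> closure (orbit G x)" for w
    using generic[OF _ _ that] by (auto simp: coord_support_def)
  have "coord_support v \<subseteq> B" by (auto simp: coord_support_def)
  then have "mu a ` closure (orbit G x) \<subseteq> mu a ` closure (orbit (mexp ` a) v)"
    unfolding mu_closure_torus_orbit using support by (rule mu_image_subset_cone)
  moreover have "mu a ` closure (orbit (mexp ` a) v) \<subseteq> mu a ` closure (orbit G x)"
    using orbit_subset_orbit[OF abelian_subalg_mexp_subset[OF assms(3)] v]
    by (intro image_mono closure_mono)
  ultimately have eq: "mu a ` closure (orbit G x) = mu a ` closure (orbit (mexp ` a) v)" by blast
  have "polyhedral a (mu a ` closure (orbit G x))"
    unfolding eq mu_closure_torus_orbit using \<open>coord_support v \<subseteq> B\<close> by (rule polyhedral_weight_cone)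
  then show ?thesis using v eq by blast
qed

end
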